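(* Let $G$ be a connected graph with $|V(G)| \ge 3$. If $\det(G) \neq 1$, then $\frac{1}{2}\det(G) \le \det'(G) \le \det(G)$.
   Context: A vertex subset $S$ of $G$ is a vertex determining set if the only automorphism of $G$ fixing every vertex of $S$ is the identity; the determining number $\det(G)$ is the minimum size of a vertex determining set. For a graph $G$ with at most one isolated vertex and no component isomorphic to $K_2$, an edge subset $T$ is an edge determining set if the only automorphism $\phi$ of $G$ satisfying $\{\phi(u),\phi(v)\}=\{u,v\}$ for all $\{u,v\}\in T$ is the identity; the determining index $\det'(G)$ is the minimum size of an edge determining set. *)

theory Defs
  imports Complex_Main
begin

definition simple_graph :: "'a set \<Rightarrow> 'a set set \<Rightarrow> bool" where
  "simple_graph V E \<longleftrightarrow> finite V \<and>
     (\<forall>e\<in>E. \<exists>u v. u \<in> V \<and> v \<in> V \<and> u \<noteq> v \<and> e = {u, v})"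

definition adj_rel :: "'a set set \<Rightarrow> ('a \<times> 'a) set" where
  "adj_rel E = {(u, v). {u, v} \<in> E}"

definition connected_graph :: "'a set \<Rightarrow> 'a set set \<Rightarrow> bool" where
  "connected_graph V E \<longleftrightarrow> (\<forall>u\<in>V. \<forall>v\<in>V. (u, v) \<in> (adj_rel E)\<^sup>*)"

definition graph_aut :: "'a set \<Rightarrow> 'a set set \<Rightarrow> ('a \<Rightarrow> 'a) \<Rightarrow> bool" where
  "graph_aut V E \<phi> \<longleftrightarrow> bij_betw \<phi> V V \<and>
     (\<forall>u\<in>V. \<forall>v\<in>V. {u, v} \<in> E \<longleftrightarrow> {\<phi> u, \<phi> v} \<in> E)"

definition vertex_determining :: "'a set \<Rightarrow> 'a set set \<Rightarrow> 'a set \<Rightarrow> bool" where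
  "vertex_determining V E S \<longleftrightarrow> S \<subseteq> V \<and>
     (\<forall>\<phi>. graph_aut V E \<phi> \<and> (\<forall>x\<in>S. \<phi> x = x) \<longrightarrow> (\<forall>x\<in>V. \<phi> x = x))"

definition determining_number :: "'a set \<Rightarrow> 'a set set \<Rightarrow> nat" where
  "determining_number V E = Min (card ` {S. vertex_determining V E S})"

definition edge_determining :: "'a set \<Rightarrow> 'a set set \<Rightarrow> 'a set set \<Rightarrow> bool" where
  "edge_determining V E T \<longleftrightarrow> T \<subseteq> E \<and>
     (\<forall>\<phi>. graph_aut V E \<phi> \<and> (\<forall>u v. {u, v} \<in> T \<longrightarrow> {\<phi> u, \<phi> v} = {u, v})
          \<longrightarrow> (\<forall>x\<in>V. \<phi> x = x))"

definition determining_index :: "'a set \<Rightarrow> 'a set set \<Rightarrow> nat" where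
  "determining_index V E = Min (card ` {T. edge_determining V E T})"

end

theory Submission
  imports Defs
begin

text \<open>Upper bound: extend a vertex determining set S by one edge per vertex. Fix two
  vertices v1, v2 of S; two well-chosen edges force every automorphism preserving them
  to fix v1 and v2. For every other x \<in> S take the first edge xw of a shortest walk from x
  to v1: an automorphism fixing v1 that swaps x and w would turn the remaining walk from w
  into a shorter walk from x to v1. So at most |S| edges fix S pointwise, hence all of V.
  Lower bound: the end vertices of an edge determining set T form a vertex determining set
  of size at most 2|T|.\<close>

definition preserves_edges :: "('a \<Rightarrow> 'a) \<Rightarrow> 'a set set \<Rightarrow> bool" where
  "preserves_edges \<psi> T \<longleftrightarrow> (\<forall>u v. {u, v} \<in> T \<longrightarrow> {\<psi> u, \<psi> v} = {u, v})"

lemma edge_determining_iff: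
  "edge_determining V E T \<longleftrightarrow> T \<subseteq> E \<and>
     (\<forall>\<psi>. graph_aut V E \<psi> \<and> preserves_edges \<psi> T \<longrightarrow> (\<forall>x\<in>V. \<psi> x = x))"
  by (simp add: edge_determining_def preserves_edges_def)

lemma rtrancl_shortest_relpow:
  assumes "(x, y) \<in> r\<^sup>*"
  obtains d where "(x, y) \<in> r ^^ d" and "\<And>n. n < d \<Longrightarrow> (x, y) \<notin> r ^^ n"
  using assms exists_least_iff[of "\<lambda>n. (x, y) \<in> r ^^ n"] by (metis rtrancl_power)

lemma rtrancl_first_step_of_shortest:
  assumes "(x, y) \<in> r\<^sup>*" and "x \<noteq> y"
  obtains w n where "(x, w) \<in> r" and "(w, y) \<in> r ^^ n" and "(x, y) \<notin> r ^^ n"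
proof -
  obtain d where walk: "(x, y) \<in> r ^^ d" and shortest: "\<And>n. n < d \<Longrightarrow> (x, y) \<notin> r ^^ n"
    using rtrancl_shortest_relpow[OF assms(1)] by blast
  then obtain n where "d = Suc n"
    using assms(2) by (cases d) auto
  with walk shortest that show ?thesis
    by (metis lessI relpow_Suc_D2)
qed

lemma rtrancl_leaves_set:
  assumes "(x, y) \<in> r\<^sup>*" and "x \<in> A" and "y \<notin> A"
  obtains u z where "u \<in> A" and "z \<notin> A" and "(u, z) \<in> r"
  using assms by (induction rule: rtrancl_induct) auto

lemma adj_relD:
  assumes "simple_graph V E" and "(x, y) \<in> adj_rel E"
  shows "x \<in> V" and "y \<in> V" and "x \<noteq> y" and "{x, y} \<in> E"
proof -
  have edge: "{x, y} \<in> E"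
    using assms(2) by (simp add: adj_rel_def)
  then obtain u v where "u \<in> V" "v \<in> V" "u \<noteq> v" "{x, y} = {u, v}"
    using assms(1) unfolding simple_graph_def by blast
  then show "x \<in> V" "y \<in> V" "x \<noteq> y" "{x, y} \<in> E"
    using edge by (auto simp: doubleton_eq_iff)
qed

lemma graph_aut_relpow:
  assumes "simple_graph V E" and "graph_aut V E \<psi>"
  shows "x \<in> V \<Longrightarrow> (x, y) \<in> adj_rel E ^^ n \<Longrightarrow> (\<psi> x, \<psi> y) \<in> adj_rel E ^^ n"
proof (induction n arbitrary: x)
  case 0
  then show ?case by simp
next
  case (Suc n)
  then obtain z where xz: "(x, z) \<in> adj_rel E" and zy: "(z, y) \<in> adj_rel E ^^ n"
    by (metis relpow_Suc_D2)
  have "{\<psi> x, \<psi> z} \<in> E"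
    using assms adj_relD[OF assms(1) xz] Suc.prems(1) unfolding graph_aut_def by blast
  then have "(\<psi> x, \<psi> z) \<in> adj_rel E"
    by (simp add: adj_rel_def)
  then show ?case
    using Suc.IH[OF adj_relD(2)[OF assms(1) xz] zy] by (rule relpow_Suc_I2)
qed

lemma graph_aut_fixes_first_step_of_shortest:
  assumes "simple_graph V E" and "graph_aut V E \<psi>" and "\<psi> v = v"
    and "(x, w) \<in> adj_rel E" and "(w, v) \<in> adj_rel E ^^ n" and "(x, v) \<notin> adj_rel E ^^ n"
    and "{\<psi> x, \<psi> w} = {x, w}"
  shows "\<psi> x = x"
proof (rule ccontr)
  assume "\<psi> x \<noteq> x"
  then have "\<psi> w = x"
    using assms(7) by (auto simp: doubleton_eq_iff)
  moreover have "(\<psi> w, \<psi> v) \<in> adj_rel E ^^ n"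
    using graph_aut_relpow[OF assms(1,2) adj_relD(2)[OF assms(1,4)] assms(5)] .
  ultimately show False
    using assms(3,6) by simp
qed

lemma adjacent_pair_fixed_by_two_edges:
  assumes sg: "simple_graph V E" and conn: "connected_graph V E" and "card V \<ge> 3"
    and v12: "(v\<^sub>1, v\<^sub>2) \<in> adj_rel E"
  obtains T where "T \<subseteq> E" and "card T \<le> 2"
    and "\<And>\<psi>. preserves_edges \<psi> T \<Longrightarrow> \<psi> v\<^sub>1 = v\<^sub>1 \<and> \<psi> v\<^sub>2 = v\<^sub>2"
proof -
  have "\<not> V \<subseteq> {v\<^sub>1, v\<^sub>2}"
  proof
    assume "V \<subseteq> {v\<^sub>1, v\<^sub>2}"
    then have "card V \<le> card {v\<^sub>1, v\<^sub>2}"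
      by (intro card_mono) auto
    also have "\<dots> \<le> 2"
      by (simp add: card_insert_if)
    finally show False
      using \<open>card V \<ge> 3\<close> by simp
  qed
  then obtain c where "c \<in> V" and c: "c \<notin> {v\<^sub>1, v\<^sub>2}"
    by blast
  then have "(v\<^sub>1, c) \<in> (adj_rel E)\<^sup>*"
    using conn adj_relD(1)[OF sg v12] unfolding connected_graph_def by blast
  then obtain u z where u: "u \<in> {v\<^sub>1, v\<^sub>2}" and z: "z \<notin> {v\<^sub>1, v\<^sub>2}"
    and uz: "(u, z) \<in> adj_rel E"
    using insertI1 c by (rule rtrancl_leaves_set)
  show thesis
  proof (rule that[of "{{v\<^sub>1, v\<^sub>2}, {u, z}}"])
    show "{{v\<^sub>1, v\<^sub>2}, {u, z}} \<subseteq> E"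
      using adj_relD(4)[OF sg v12] adj_relD(4)[OF sg uz] by blast
    show "card {{v\<^sub>1, v\<^sub>2}, {u, z}} \<le> 2"
      by (simp add: card_insert_le_m1)
  next
    fix \<psi> assume "preserves_edges \<psi> {{v\<^sub>1, v\<^sub>2}, {u, z}}"
    then have e12: "{\<psi> v\<^sub>1, \<psi> v\<^sub>2} = {v\<^sub>1, v\<^sub>2}" and euz: "{\<psi> u, \<psi> z} = {u, z}"
      unfolding preserves_edges_def by blast+
    \<comment> \<open>\<psi> u lies in both edges, whose only common vertex is u\<close>
    have "\<psi> u = u"
      using u z e12 euz by blast
    then show "\<psi> v\<^sub>1 = v\<^sub>1 \<and> \<psi> v\<^sub>2 = v\<^sub>2"
      using u e12 adj_relD(3)[OF sg v12] by (auto simp: doubleton_eq_iff)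
  qed
qed

lemma nonadjacent_pair_fixed_by_two_edges:
  assumes sg: "simple_graph V E" and conn: "connected_graph V E"
    and "v\<^sub>1 \<in> V" and "v\<^sub>2 \<in> V" and "v\<^sub>1 \<noteq> v\<^sub>2" and "(v\<^sub>1, v\<^sub>2) \<notin> adj_rel E"
  obtains T where "T \<subseteq> E" and "card T \<le> 2"
    and "\<And>\<psi>. graph_aut V E \<psi> \<Longrightarrow> preserves_edges \<psi> T \<Longrightarrow> \<psi> v\<^sub>1 = v\<^sub>1 \<and> \<psi> v\<^sub>2 = v\<^sub>2"
proof -
  obtain d where walk: "(v\<^sub>1, v\<^sub>2) \<in> adj_rel E ^^ d"
    and shortest: "\<And>n. n < d \<Longrightarrow> (v\<^sub>1, v\<^sub>2) \<notin> adj_rel E ^^ n"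
    using conn assms(3,4) unfolding connected_graph_def by (meson rtrancl_shortest_relpow)
  have "d \<noteq> 0"
    using walk assms(5) by (metis relpow_0_E)
  moreover have "d \<noteq> 1"
    using walk assms(6) by auto
  ultimately obtain m where d: "d = Suc (Suc m)"
    by (metis One_nat_def not0_implies_Suc)
  \<comment> \<open>a shortest walk v1 a \<dots> b v2, where a = b is possible\<close>
  obtain a where v1a: "(v\<^sub>1, a) \<in> adj_rel E" and av2: "(a, v\<^sub>2) \<in> adj_rel E ^^ Suc m"
    using walk d by (metis relpow_Suc_D2)
  obtain b where ab: "(a, b) \<in> adj_rel E ^^ m" and bv2: "(b, v\<^sub>2) \<in> adj_rel E"
    using av2 by auto
  have v1b: "(v\<^sub>1, b) \<in> adj_rel E ^^ Suc m"
    using v1a ab by (rule relpow_Suc_I2)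
  have short: "(v\<^sub>1, v\<^sub>2) \<notin> adj_rel E ^^ m" "(v\<^sub>1, v\<^sub>2) \<notin> adj_rel E ^^ Suc m"
    using shortest d by (simp_all del: relpow.simps)
  show thesis
  proof (rule that[of "{{v\<^sub>1, a}, {b, v\<^sub>2}}"])
    show "{{v\<^sub>1, a}, {b, v\<^sub>2}} \<subseteq> E"
      using adj_relD(4)[OF sg v1a] adj_relD(4)[OF sg bv2] by blast
    show "card {{v\<^sub>1, a}, {b, v\<^sub>2}} \<le> 2"
      by (simp add: card_insert_le_m1)
  next
    fix \<psi> assume aut: "graph_aut V E \<psi>" and "preserves_edges \<psi> {{v\<^sub>1, a}, {b, v\<^sub>2}}"
    then have e1: "{\<psi> v\<^sub>1, \<psi> a} = {v\<^sub>1, a}" and e2: "{\<psi> b, \<psi> v\<^sub>2} = {b, v\<^sub>2}"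
      unfolding preserves_edges_def by blast+
    have aV: "a \<in> V"
      using adj_relD(2)[OF sg v1a] .
    have fix1: "\<psi> v\<^sub>1 = v\<^sub>1"
    proof (rule ccontr)
      assume "\<psi> v\<^sub>1 \<noteq> v\<^sub>1"
      then have "\<psi> a = v\<^sub>1"
        using e1 by (auto simp: doubleton_eq_iff)
      \<comment> \<open>the image of the walk from a to v2 or to b is then too short\<close>
      moreover have "\<psi> b = b \<and> \<psi> v\<^sub>2 = v\<^sub>2 \<or> \<psi> b = v\<^sub>2"
        using e2 by (auto simp: doubleton_eq_iff)
      ultimately show False
        using graph_aut_relpow[OF sg aut aV av2] graph_aut_relpow[OF sg aut aV ab] short
        by auto
    qed
    have "\<psi> v\<^sub>2 = v\<^sub>2"
    proof (rule ccontr)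
      assume "\<psi> v\<^sub>2 \<noteq> v\<^sub>2"
      then have "\<psi> b = v\<^sub>2"
        using e2 by (auto simp: doubleton_eq_iff)
      then show False
        using graph_aut_relpow[OF sg aut assms(3) v1b] fix1 short by simp
    qed
    with fix1 show "\<psi> v\<^sub>1 = v\<^sub>1 \<and> \<psi> v\<^sub>2 = v\<^sub>2" ..
  qed
qed

lemma pair_fixed_by_two_edges:
  assumes "simple_graph V E" and "connected_graph V E" and "card V \<ge> 3"
    and "v\<^sub>1 \<in> V" and "v\<^sub>2 \<in> V" and "v\<^sub>1 \<noteq> v\<^sub>2"
  obtains T where "T \<subseteq> E" and "card T \<le> 2"
    and "\<And>\<psi>. graph_aut V E \<psi> \<Longrightarrow> preserves_edges \<psi> T \<Longrightarrow> \<psi> v\<^sub>1 = v\<^sub>1 \<and> \<psi> v\<^sub>2 = v\<^sub>2"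
proof (cases "(v\<^sub>1, v\<^sub>2) \<in> adj_rel E")
  case True
  then show thesis
    using adjacent_pair_fixed_by_two_edges[OF assms(1-3)] that by metis
next
  case False
  then show thesis
    using nonadjacent_pair_fixed_by_two_edges[OF assms(1,2,4-6)] that by metis
qed

lemma set_fixed_by_edges_towards_vertex:
  assumes sg: "simple_graph V E" and conn: "connected_graph V E"
    and "v \<in> V" and "X \<subseteq> V" and "v \<notin> X"
  obtains T where "T \<subseteq> E" and "card T \<le> card X"
    and "\<And>\<psi>. graph_aut V E \<psi> \<Longrightarrow> \<psi> v = v \<Longrightarrow> preserves_edges \<psi> T \<Longrightarrow> \<forall>x\<in>X. \<psi> x = x"
proof -
  have "\<forall>x\<in>X. \<exists>w n. (x, w) \<in> adj_rel E \<and> (w, v) \<in> adj_rel E ^^ n \<and> (x, v) \<notin> adj_rel E ^^ n"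
  proof
    fix x assume "x \<in> X"
    then have "(x, v) \<in> (adj_rel E)\<^sup>*" and "x \<noteq> v"
      using conn assms(3-5) unfolding connected_graph_def by auto
    then show "\<exists>w n. (x, w) \<in> adj_rel E \<and> (w, v) \<in> adj_rel E ^^ n \<and> (x, v) \<notin> adj_rel E ^^ n"
      by (metis rtrancl_first_step_of_shortest)
  qed
  then obtain w n where "\<forall>x\<in>X. (x, w x) \<in> adj_rel E \<and> (w x, v) \<in> adj_rel E ^^ n x
      \<and> (x, v) \<notin> adj_rel E ^^ n x"
    by metis
  then have step: "\<And>x. x \<in> X \<Longrightarrow> (x, w x) \<in> adj_rel E"
    and rest: "\<And>x. x \<in> X \<Longrightarrow> (w x, v) \<in> adj_rel E ^^ n x"
    and shortest: "\<And>x. x \<in> X \<Longrightarrow> (x, v) \<notin> adj_rel E ^^ n x"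
    by blast+
  show thesis
  proof (rule that[of "(\<lambda>x. {x, w x}) ` X"])
    show "(\<lambda>x. {x, w x}) ` X \<subseteq> E"
      using step adj_relD(4)[OF sg] by blast
    have "finite X"
      using sg assms(4) finite_subset by (auto simp: simple_graph_def)
    then show "card ((\<lambda>x. {x, w x}) ` X) \<le> card X"
      by (rule card_image_le)
  next
    fix \<psi> assume aut: "graph_aut V E \<psi>" and "\<psi> v = v"
      and pres: "preserves_edges \<psi> ((\<lambda>x. {x, w x}) ` X)"
    show "\<forall>x\<in>X. \<psi> x = x"
    proof
      fix x assume "x \<in> X"
      then have "{\<psi> x, \<psi> (w x)} = {x, w x}"
        using pres unfolding preserves_edges_def by blast
      then show "\<psi> x = x"
        using graph_aut_fixes_first_step_of_shortest[OF sg aut \<open>\<psi> v = v\<close>]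
          step rest shortest \<open>x \<in> X\<close> by blast
    qed
  qed
qed

lemma edge_determining_of_vertex_determining:
  assumes sg: "simple_graph V E" and conn: "connected_graph V E" and "card V \<ge> 3"
    and vd: "vertex_determining V E S" and "card S \<noteq> 1"
  obtains T where "edge_determining V E T" and "card T \<le> card S"
proof (cases "S = {}")
  case True
  then have "edge_determining V E {}"
    using vd by (simp add: edge_determining_def vertex_determining_def)
  then show thesis
    using that by simp
next
  case False
  have SV: "S \<subseteq> V"
    using vd by (simp add: vertex_determining_def)
  have finS: "finite S"
    using SV sg finite_subset by (auto simp: simple_graph_def)
  obtain v\<^sub>1 where "v\<^sub>1 \<in> S"
    using False by blast
  moreover have "S \<noteq> {v\<^sub>1}"
    using \<open>card S \<noteq> 1\<close> by auto
  ultimately obtain v\<^sub>2 where v12: "v\<^sub>1 \<in> S" "v\<^sub>2 \<in> S" "v\<^sub>1 \<noteq> v\<^sub>2"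
    by blast
  obtain T\<^sub>2 where T2E: "T\<^sub>2 \<subseteq> E" and cardT2: "card T\<^sub>2 \<le> 2"
    and T2fix: "\<And>\<psi>. graph_aut V E \<psi> \<Longrightarrow> preserves_edges \<psi> T\<^sub>2 \<Longrightarrow> \<psi> v\<^sub>1 = v\<^sub>1 \<and> \<psi> v\<^sub>2 = v\<^sub>2"
    using pair_fixed_by_two_edges[OF sg conn \<open>card V \<ge> 3\<close>] v12 SV by (metis subsetD)
  obtain T\<^sub>X where TXE: "T\<^sub>X \<subseteq> E" and cardTX: "card T\<^sub>X \<le> card (S - {v\<^sub>1, v\<^sub>2})"
    and TXfix: "\<And>\<psi>. graph_aut V E \<psi> \<Longrightarrow> \<psi> v\<^sub>1 = v\<^sub>1 \<Longrightarrow> preserves_edges \<psi> T\<^sub>X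
           \<Longrightarrow> \<forall>x\<in>S - {v\<^sub>1, v\<^sub>2}. \<psi> x = x"
    using set_fixed_by_edges_towards_vertex[OF sg conn, of v\<^sub>1 "S - {v\<^sub>1, v\<^sub>2}"] v12 SV by blast
  show thesis
  proof (rule that[of "T\<^sub>2 \<union> T\<^sub>X"])
    have "card (T\<^sub>2 \<union> T\<^sub>X) \<le> card T\<^sub>2 + card T\<^sub>X"
      by (rule card_Un_le)
    also have "\<dots> \<le> card S"
      using cardT2 cardTX v12 finS card_mono[OF finS, of "{v\<^sub>1, v\<^sub>2}"] by (simp add: card_Diff_subset)
    finally show "card (T\<^sub>2 \<union> T\<^sub>X) \<le> card S" .
  next
    show "edge_determining V E (T\<^sub>2 \<union> T\<^sub>X)"
      unfolding edge_determining_iff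
    proof (intro conjI allI impI)
      show "T\<^sub>2 \<union> T\<^sub>X \<subseteq> E"
        using T2E TXE by blast
      fix \<psi> assume "graph_aut V E \<psi> \<and> preserves_edges \<psi> (T\<^sub>2 \<union> T\<^sub>X)"
      then have aut: "graph_aut V E \<psi>"
        and "preserves_edges \<psi> T\<^sub>2" and "preserves_edges \<psi> T\<^sub>X"
        unfolding preserves_edges_def by blast+
      then have "\<forall>x\<in>S. \<psi> x = x"
        using T2fix TXfix by blast
      then show "\<forall>x\<in>V. \<psi> x = x"
        using vd aut unfolding vertex_determining_def by blast
    qed
  qed
qed

lemma simple_graph_edge:
  assumes "simple_graph V E" and "e \<in> E"
  shows "e \<subseteq> V" and "card e = 2"
proof -
  obtain u v where "u \<in> V" "v \<in> V" "u \<noteq> v" "e = {u, v}"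
    using assms unfolding simple_graph_def by blast
  then show "e \<subseteq> V" "card e = 2"
    by simp_all
qed

lemma vertex_determining_Union:
  assumes "simple_graph V E" and "edge_determining V E T"
  shows "vertex_determining V E (\<Union>T)"
  unfolding vertex_determining_def
proof (intro conjI allI impI)
  have "T \<subseteq> E"
    using assms(2) by (simp add: edge_determining_def)
  then show "\<Union>T \<subseteq> V"
    using simple_graph_edge(1)[OF assms(1)] by blast
  fix \<phi> assume "graph_aut V E \<phi> \<and> (\<forall>x\<in>\<Union>T. \<phi> x = x)"
  moreover from this have "preserves_edges \<phi> T"
    unfolding preserves_edges_def by auto
  ultimately show "\<forall>x\<in>V. \<phi> x = x"
    using assms(2) unfolding edge_determining_iff by blast
qed

lemma card_Union_edges_le:
  assumes "simple_graph V E" and "T \<subseteq> E"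
  shows "card (\<Union>T) \<le> 2 * card T"
proof -
  have "card (\<Union>T) \<le> sum card T"
    by (rule card_Union_le_sum_card)
  also have "\<dots> = 2 * card T"
    using simple_graph_edge(2)[OF assms(1)] assms(2) by (simp add: subset_iff)
  finally show ?thesis .
qed

lemma finite_card_vertex_determining:
  assumes "simple_graph V E"
  shows "finite (card ` {S. vertex_determining V E S})"
proof -
  have "{S. vertex_determining V E S} \<subseteq> Pow V"
    by (auto simp: vertex_determining_def)
  moreover have "finite V"
    using assms by (simp add: simple_graph_def)
  ultimately show ?thesis
    by (meson finite_Pow_iff finite_imageI finite_subset)
qed

lemma finite_card_edge_determining:
  assumes "simple_graph V E"
  shows "finite (card ` {T. edge_determining V E T})"
proof -
  have "{T. edge_determining V E T} \<subseteq> Pow E"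
    by (auto simp: edge_determining_def)
  moreover have "E \<subseteq> Pow V"
    using simple_graph_edge(1)[OF assms] by blast
  moreover have "finite V"
    using assms by (simp add: simple_graph_def)
  ultimately show ?thesis
    by (meson finite_Pow_iff finite_imageI finite_subset)
qed

lemma determining_number_le:
  assumes "simple_graph V E" and "vertex_determining V E S"
  shows "determining_number V E \<le> card S"
  unfolding determining_number_def
  using finite_card_vertex_determining[OF assms(1)] assms(2) by (intro Min_le) auto

lemma determining_number_attained:
  assumes "simple_graph V E"
  obtains S where "vertex_determining V E S" and "card S = determining_number V E"
proof -
  have "vertex_determining V E V"
    by (simp add: vertex_determining_def)
  then have "determining_number V E \<in> card ` {S. vertex_determining V E S}"
    unfolding determining_number_def
    using finite_card_vertex_determining[OF assms] by (intro Min_in) auto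
  then show thesis
    using that by auto
qed

lemma determining_index_le:
  assumes "simple_graph V E" and "edge_determining V E T"
  shows "determining_index V E \<le> card T"
  unfolding determining_index_def
  using finite_card_edge_determining[OF assms(1)] assms(2) by (intro Min_le) auto

lemma determining_number_le_double_index:
  assumes "simple_graph V E" and "edge_determining V E T"
  shows "determining_number V E \<le> 2 * determining_index V E"
proof -
  have "determining_index V E \<in> card ` {T. edge_determining V E T}"
    unfolding determining_index_def
    using finite_card_edge_determining[OF assms(1)] assms(2) by (intro Min_in) auto
  then obtain T' where T': "edge_determining V E T'" "card T' = determining_index V E"
    by auto
  have "determining_number V E \<le> card (\<Union>T')"
    using determining_number_le[OF assms(1) vertex_determining_Union[OF assms(1) T'(1)]] .
  also have "\<dots> \<le> 2 * card T'"
    using card_Union_edges_le[OF assms(1)] T'(1) by (simp add: edge_determining_def)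
  finally show ?thesis
    using T'(2) by simp
qed

theorem corollary1:
  fixes V :: "'a set" and E :: "'a set set"
  assumes "simple_graph V E"
    and "connected_graph V E"
    and "card V \<ge> 3"
    and "determining_number V E \<noteq> 1"
  shows "real (determining_number V E) / 2 \<le> real (determining_index V E)
         \<and> determining_index V E \<le> determining_number V E"
proof -
  obtain S where S: "vertex_determining V E S" "card S = determining_number V E"
    using determining_number_attained[OF assms(1)] .
  obtain T where T: "edge_determining V E T" "card T \<le> card S"
    using edge_determining_of_vertex_determining[OF assms(1-3) S(1)] S(2) assms(4) by metis
  have "determining_index V E \<le> determining_number V E"
    using determining_index_le[OF assms(1) T(1)] T(2) S(2) by simp
  moreover have "determining_number V E \<le> 2 * determining_index V E"
    using determining_number_le_double_index[OF assms(1) T(1)] .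
  ultimately show ?thesis
    by simp
qed

end
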